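(* Let $m\ge 1$, let $\lambda_2\ge 0$, and let $f_1\ge f_2\ge\cdots\ge f_m$ be real numbers. Then there exist real numbers $\tau_{ij}\in[-\lambda_2,\lambda_2]$ for $i\ne j\in\{1,\dots,m\}$, satisfying $\tau_{ij}=-\tau_{ji}$ for all $i\neq j$, such that $$f_i+\sum_{j\in\{1,\dots,m\}\setminus\{i\}}\tau_{ij}=0,\qquad i=1,\dots,m,$$ if and only if $$\sum_{j=1}^{k}f_j\le\lambda_2 k(m-k)\quad\text{for }k=1,\dots,m-1,$$ and $\sum_{j=1}^{m}f_j=0$. *)

theory Defs
  imports Main "HOL.Real"
begin

end

theory Submission
  imports Defs Complex_Main
begin

text \<open>
  Necessity: the transfers inside a prefix \<open>{1..k}\<close> cancel in pairs, so \<open>f 1 + \<dots> + f k\<close> is the net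
  flow out of the prefix, which consists of \<open>k (m - k)\<close> transfers of size at most \<open>\<lambda>\<close>.

  Sufficiency, by induction on \<open>m\<close>: the smallest load \<open>f (m + 1) \<le> 0\<close> is absorbed by water filling.
  Node \<open>i \<le> m\<close> sends \<open>clamp \<lambda> (f i - \<theta>)\<close> to node \<open>m + 1\<close>, where the level \<open>\<theta>\<close> is chosen by the
  intermediate value theorem so that these amounts add up to \<open>- f (m + 1)\<close>. The remaining loads
  \<open>f i - clamp \<lambda> (f i - \<theta>)\<close> are still nonincreasing and satisfy the prefix condition for \<open>m\<close>: directly
  for prefixes on which all transfers are saturated or which contain all nonzero transfers, and in
  between the remaining loads equal \<open>\<theta>\<close>, so the prefix sums are linear there and stay below the
  concave bound \<open>\<lambda> k (m - k)\<close> because they do so at both ends.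
\<close>

definition clamp :: "real \<Rightarrow> real \<Rightarrow> real" where
  "clamp l x = min l (max 0 x)"

definition balancing :: "real \<Rightarrow> nat \<Rightarrow> (nat \<Rightarrow> real) \<Rightarrow> (nat \<Rightarrow> nat \<Rightarrow> real) \<Rightarrow> bool" where
  "balancing l m f \<tau> \<longleftrightarrow>
     (\<forall>i\<in>{1..m}. \<forall>j\<in>{1..m}. i \<noteq> j \<longrightarrow> \<bar>\<tau> i j\<bar> \<le> l \<and> \<tau> i j = - \<tau> j i) \<and>
     (\<forall>i\<in>{1..m}. f i + (\<Sum>j\<in>{1..m} - {i}. \<tau> i j) = 0)"

definition prefix_admissible :: "real \<Rightarrow> nat \<Rightarrow> (nat \<Rightarrow> real) \<Rightarrow> bool" where
  "prefix_admissible l m f \<longleftrightarrow>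
     (\<forall>k\<in>{1..m-1}. (\<Sum>j=1..k. f j) \<le> l * real k * (real m - real k)) \<and> (\<Sum>j=1..m. f j) = 0"

lemma sum_atLeastAtMost_split:
  "a \<le> b \<Longrightarrow> (\<Sum>i=1..b. g i) = (\<Sum>i=1..a. g i) + (\<Sum>i=Suc a..b. g i)"
  using sum.ub_add_nat[of 1 a g "b - a"] by simp

lemma sum_offdiag_skew_eq_0:
  assumes "finite A" and "\<And>i j. i \<in> A \<Longrightarrow> j \<in> A \<Longrightarrow> i \<noteq> j \<Longrightarrow> \<tau> i j = - \<tau> j i"
  shows "(\<Sum>i\<in>A. \<Sum>j\<in>A - {i}. (\<tau> i j :: real)) = 0"
proof -
  have offdiag: "A - {i} = {j. j \<in> A \<and> i \<noteq> j}" for i by auto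
  have "(\<Sum>i\<in>A. \<Sum>j\<in>A - {i}. \<tau> i j) = (\<Sum>j\<in>A. \<Sum>i\<in>{i. i \<in> A \<and> i \<noteq> j}. \<tau> i j)"
    unfolding offdiag by (rule sum.swap_restrict) (use assms in auto)
  also have "\<dots> = (\<Sum>j\<in>A. \<Sum>i\<in>{i. i \<in> A \<and> i \<noteq> j}. - \<tau> j i)"
    using assms(2) by (intro sum.cong refl) auto
  also have "\<dots> = - (\<Sum>j\<in>A. \<Sum>i\<in>A - {j}. \<tau> j i)"
    by (simp add: sum_negf offdiag eq_commute)
  finally show ?thesis by simp
qed

lemma balancing_prefix_sum_eq:
  assumes "balancing l m f \<tau>" and "k \<le> m"
  shows "(\<Sum>i=1..k. f i) = - (\<Sum>i=1..k. \<Sum>j=Suc k..m. \<tau> i j)"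
proof -
  have skew: "\<tau> i j = - \<tau> j i" if "i \<in> {1..m}" "j \<in> {1..m}" "i \<noteq> j" for i j
    using assms(1) that unfolding balancing_def by blast
  have row_split: "(\<Sum>j\<in>{1..m} - {i}. \<tau> i j)
      = (\<Sum>j\<in>{1..k} - {i}. \<tau> i j) + (\<Sum>j=Suc k..m. \<tau> i j)" if "i \<in> {1..k}" for i
  proof -
    have "{1..m} - {i} = ({1..k} - {i}) \<union> {Suc k..m}" using that assms(2) by auto
    moreover have "({1..k} - {i}) \<inter> {Suc k..m} = {}" by auto
    ultimately show ?thesis by (simp add: sum.union_disjoint)
  qed
  have inner: "(\<Sum>i=1..k. \<Sum>j\<in>{1..k} - {i}. \<tau> i j) = 0"
  proof (rule sum_offdiag_skew_eq_0)
    show "\<tau> i j = - \<tau> j i" if "i \<in> {1..k}" "j \<in> {1..k}" "i \<noteq> j" for i j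
      using that assms(2) by (intro skew) auto
  qed simp
  have "(\<Sum>i=1..k. f i) = (\<Sum>i=1..k. - ((\<Sum>j\<in>{1..k} - {i}. \<tau> i j) + (\<Sum>j=Suc k..m. \<tau> i j)))"
  proof (rule sum.cong[OF refl])
    fix i assume i: "i \<in> {1..k}"
    then have "f i + (\<Sum>j\<in>{1..m} - {i}. \<tau> i j) = 0"
      using assms unfolding balancing_def by (meson atLeastAtMost_iff le_trans)
    then show "f i = - ((\<Sum>j\<in>{1..k} - {i}. \<tau> i j) + (\<Sum>j=Suc k..m. \<tau> i j))"
      using row_split[OF i] by simp
  qed
  also have "\<dots> = - (\<Sum>i=1..k. \<Sum>j\<in>{1..k} - {i}. \<tau> i j) - (\<Sum>i=1..k. \<Sum>j=Suc k..m. \<tau> i j)"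
    by (simp add: sum_subtractf sum_negf)
  also have "\<dots> = - (\<Sum>i=1..k. \<Sum>j=Suc k..m. \<tau> i j)"
    using inner by simp
  finally show ?thesis .
qed

lemma balancing_imp_prefix_admissible:
  assumes "balancing l m f \<tau>"
  shows "prefix_admissible l m f"
  unfolding prefix_admissible_def
proof
  show "\<forall>k\<in>{1..m-1}. (\<Sum>j=1..k. f j) \<le> l * real k * (real m - real k)"
  proof
    fix k assume "k \<in> {1..m-1}"
    then have k: "k \<le> m" by auto
    have "(\<Sum>j=1..k. f j) = (\<Sum>i=1..k. \<Sum>j=Suc k..m. - \<tau> i j)"
      using balancing_prefix_sum_eq[OF assms k] by (simp add: sum_negf)
    also have "\<dots> \<le> (\<Sum>i=1..k. \<Sum>j=Suc k..m. l)"
    proof (intro sum_mono)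
      fix i j assume "i \<in> {1..k}" "j \<in> {Suc k..m}"
      then have "i \<in> {1..m}" "j \<in> {1..m}" "i \<noteq> j" using k by auto
      then have "\<bar>\<tau> i j\<bar> \<le> l"
        using assms unfolding balancing_def by blast
      then show "- \<tau> i j \<le> l" by simp
    qed
    also have "\<dots> = l * real k * (real m - real k)"
      using k by (simp add: of_nat_diff)
    finally show "(\<Sum>j=1..k. f j) \<le> l * real k * (real m - real k)" .
  qed
  show "(\<Sum>j=1..m. f j) = 0"
    using balancing_prefix_sum_eq[OF assms order_refl] by simp
qed

lemma clamp_bounds: "0 \<le> l \<Longrightarrow> 0 \<le> clamp l x \<and> clamp l x \<le> l"
  by (simp add: clamp_def)

lemma diff_clamp_mono:
  "0 \<le> l \<Longrightarrow> x \<le> y \<Longrightarrow> x - clamp l (x - \<theta>) \<le> y - clamp l (y - \<theta>)"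
  by (simp add: clamp_def min_def max_def)

lemma continuous_clamp [continuous_intros]:
  "continuous_on S g \<Longrightarrow> continuous_on S (\<lambda>x. clamp l (g x))"
  unfolding clamp_def by (intro continuous_intros)

lemma clamp_sum_attains:
  fixes x :: "'a \<Rightarrow> real"
  assumes "finite A" "0 \<le> l" "0 \<le> t" "t \<le> l * real (card A)"
  shows "\<exists>\<theta>. (\<Sum>i\<in>A. clamp l (x i - \<theta>)) = t"
proof -
  define s where "s \<theta> = (\<Sum>i\<in>A. clamp l (x i + \<theta>))" for \<theta>
  define R where "R = (\<Sum>i\<in>A. \<bar>x i\<bar>)"
  have x_le_R: "\<bar>x i\<bar> \<le> R" if "i \<in> A" for i
    unfolding R_def using assms(1) that by (intro member_le_sum) auto
  have "s (- R) = 0"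
    unfolding s_def clamp_def
  proof (intro sum.neutral ballI)
    fix i assume "i \<in> A"
    then show "min l (max 0 (x i + - R)) = 0" using x_le_R[of i] assms(2) by linarith
  qed
  moreover have "s (R + l) = l * real (card A)"
    unfolding s_def clamp_def
  proof (subst sum.cong[OF refl, of _ _ "\<lambda>_. l"])
    fix i assume "i \<in> A"
    then show "min l (max 0 (x i + (R + l))) = l" using x_le_R[of i] assms(2) by linarith
  qed simp
  moreover have "continuous_on {- R..R + l} s"
    unfolding s_def by (intro continuous_intros)
  moreover have "- R \<le> R + l"
    using assms(2) sum_nonneg[of A "\<lambda>i. \<bar>x i\<bar>"] unfolding R_def by simp
  ultimately obtain \<theta> where "s \<theta> = t"
    using assms(3,4) IVT'[of s "- R" t "R + l"] by auto
  then show ?thesis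
    unfolding s_def by (intro exI[of _ "- \<theta>"]) simp
qed

lemma chord_below_parabola:
  fixes a x b l m t y ya yb :: real
  assumes "a < x" "x < b" "0 \<le> l"
    and "y = ya + (x - a) * t" "yb = y + (b - x) * t"
    and "ya \<le> l * a * (m - a)" "yb \<le> l * b * (m - b)"
  shows "y \<le> l * x * (m - x)"
proof -
  have interpolate: "(b - a) * y = (b - x) * ya + (x - a) * yb"
    by (simp only: assms(5), simp add: assms(4) algebra_simps)
  have "(b - x) * ya \<le> (b - x) * (l * a * (m - a))"
    using assms(2,6) by (intro mult_left_mono) auto
  moreover have "(x - a) * yb \<le> (x - a) * (l * b * (m - b))"
    using assms(1,7) by (intro mult_left_mono) auto
  moreover have "(b - x) * (l * a * (m - a)) + (x - a) * (l * b * (m - b))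
      = (b - a) * (l * x * (m - x)) - l * (b - a) * (x - a) * (b - x)"
    by (simp add: algebra_simps)
  moreover have "0 \<le> l * (b - a) * (x - a) * (b - x)"
    using assms(1-3) by simp
  ultimately have "(b - a) * y \<le> (b - a) * (l * x * (m - x))"
    using interpolate by linarith
  then show ?thesis using assms(1,2) by simp
qed

lemma obtain_last_before:
  fixes j k :: nat
  assumes "P j" "j \<le> k"
  obtains a where "j \<le> a" "a \<le> k" "P a" "\<And>i. a < i \<Longrightarrow> i \<le> k \<Longrightarrow> \<not> P i"
proof -
  obtain a where a: "P a \<and> a \<le> k" "\<And>i. P i \<and> i \<le> k \<Longrightarrow> i \<le> a"
    using ex_has_greatest_nat[of "\<lambda>i. P i \<and> i \<le> k" j id "Suc k"] assms by auto
  then show ?thesis using that[of a] assms by (meson le_trans not_le)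
qed

lemma obtain_first_after:
  fixes k m :: nat
  assumes "P m" "k \<le> m"
  obtains b where "k \<le> b" "b \<le> m" "P b" "\<And>i. k \<le> i \<Longrightarrow> i < b \<Longrightarrow> \<not> P i"
proof -
  obtain b where b: "P b \<and> k \<le> b" "\<And>i. P i \<and> k \<le> i \<Longrightarrow> b \<le> i"
    using ex_has_least_nat[of "\<lambda>i. P i \<and> k \<le> i" m id] assms by auto
  then show ?thesis using that[of b] assms by (meson not_le)
qed

locale water_filling =
  fixes l \<theta> :: real and m :: nat and f :: "nat \<Rightarrow> real"
  assumes l_nonneg: "0 \<le> l"
    and f_antimono: "antimono_on {1..Suc m} f"
    and f_admissible: "prefix_admissible l (Suc m) f"
    and level: "(\<Sum>i=1..m. clamp l (f i - \<theta>)) = - f (Suc m)"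
begin

definition reduced :: "nat \<Rightarrow> real" where
  "reduced i = f i - clamp l (f i - \<theta>)"

lemma f_le: "1 \<le> i \<Longrightarrow> i \<le> j \<Longrightarrow> j \<le> Suc m \<Longrightarrow> f j \<le> f i"
  using f_antimono by (auto intro: monotone_onD)

lemma f_sum: "(\<Sum>i=1..m. f i) = - f (Suc m)"
  using f_admissible by (simp add: prefix_admissible_def)

lemma f_prefix: "k \<le> m \<Longrightarrow> (\<Sum>i=1..k. f i) \<le> l * real k * (real (Suc m) - real k)"
  using f_admissible by (cases "k = 0") (auto simp: prefix_admissible_def)

lemma reduced_antimono: "antimono_on {1..m} reduced"
  unfolding reduced_def by (intro monotone_onI diff_clamp_mono l_nonneg f_le) auto

lemma reduced_sum: "(\<Sum>i=1..m. reduced i) = 0"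
  unfolding reduced_def using f_sum level by (simp add: sum_subtractf)

lemma reduced_prefix_sum: "(\<Sum>i=1..k. reduced i) = (\<Sum>i=1..k. f i) - (\<Sum>i=1..k. clamp l (f i - \<theta>))"
  unfolding reduced_def by (simp add: sum_subtractf)

lemma reduced_eq_level: "\<theta> \<le> f i \<Longrightarrow> f i \<le> \<theta> + l \<Longrightarrow> reduced i = \<theta>"
  unfolding reduced_def clamp_def by simp

lemma reduced_prefix_saturated:
  assumes "k \<le> m" and "k = 0 \<or> l \<le> f k - \<theta>"
  shows "(\<Sum>i=1..k. reduced i) \<le> l * real k * (real m - real k)"
proof -
  have "(\<Sum>i=1..k. clamp l (f i - \<theta>)) = (\<Sum>i=1..k. l)"
  proof (rule sum.cong[OF refl])
    fix i assume "i \<in> {1..k}"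
    then have "f k \<le> f i" using assms(1) by (intro f_le) auto
    then show "clamp l (f i - \<theta>) = l"
      using assms(2) \<open>i \<in> {1..k}\<close> l_nonneg unfolding clamp_def by auto
  qed
  then show ?thesis
    using reduced_prefix_sum[of k] f_prefix[OF assms(1)] by (simp add: algebra_simps)
qed

lemma reduced_prefix_empty_tail:
  assumes "k \<le> m" and "k = m \<or> f (Suc k) \<le> \<theta>"
  shows "(\<Sum>i=1..k. reduced i) \<le> l * real k * (real m - real k)"
proof -
  have "(\<Sum>i=Suc k..m. clamp l (f i - \<theta>)) = 0"
  proof (rule sum.neutral, rule ballI)
    fix i assume i: "i \<in> {Suc k..m}"
    then have "f i \<le> f (Suc k)" by (intro f_le) auto
    then show "clamp l (f i - \<theta>) = 0"
      using assms(2) i l_nonneg unfolding clamp_def by auto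
  qed
  then have "(\<Sum>i=1..k. clamp l (f i - \<theta>)) = - f (Suc m)"
    using sum_atLeastAtMost_split[OF assms(1), of "\<lambda>i. clamp l (f i - \<theta>)"] level by simp
  then have reduced_k: "(\<Sum>i=1..k. reduced i) = (\<Sum>i=1..k. f i) + f (Suc m)"
    using reduced_prefix_sum[of k] by simp
  show ?thesis
  proof (cases "f (Suc m) \<le> - (real k * l)")
    case True
    then show ?thesis
      using reduced_k f_prefix[OF assms(1)] by (simp add: algebra_simps)
  next
    case False
    have "(\<Sum>i=Suc k..m. f (Suc m)) \<le> (\<Sum>i=Suc k..m. f i)"
      by (intro sum_mono f_le) auto
    then have "(real m - real k) * f (Suc m) \<le> (\<Sum>i=Suc k..m. f i)"
      using assms(1) by (simp add: of_nat_diff)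
    moreover have "(real m - real k) * (- f (Suc m)) \<le> (real m - real k) * (l * real k)"
      using False assms(1) by (intro mult_left_mono) (auto simp: mult.commute)
    ultimately show ?thesis
      using reduced_k f_sum sum_atLeastAtMost_split[OF assms(1), of f] by (simp add: algebra_simps)
  qed
qed

lemma reduced_prefix:
  assumes "k \<le> m"
  shows "(\<Sum>i=1..k. reduced i) \<le> l * real k * (real m - real k)"
proof -
  let ?saturated = "\<lambda>i. i = 0 \<or> l \<le> f i - \<theta>"
  let ?empty_tail = "\<lambda>i. i = m \<or> f (Suc i) \<le> \<theta>"
  consider "?saturated k" | "?empty_tail k" | "\<not> ?saturated k" "\<not> ?empty_tail k"
    by blast
  then show ?thesis
  proof cases
    case 1
    then show ?thesis using reduced_prefix_saturated assms by blast
  next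
    case 2
    then show ?thesis using reduced_prefix_empty_tail assms by blast
  next
    case 3
    obtain a where a: "a \<le> k" "?saturated a" "\<And>i. a < i \<Longrightarrow> i \<le> k \<Longrightarrow> \<not> ?saturated i"
      using obtain_last_before[of ?saturated 0 k] by auto
    obtain b where b: "k \<le> b" "b \<le> m" "?empty_tail b" "\<And>i. k \<le> i \<Longrightarrow> i < b \<Longrightarrow> \<not> ?empty_tail i"
      using obtain_first_after[of ?empty_tail m k] assms by auto
    have "a < k" using a(1,2) 3(1) by (metis le_neq_implies_less)
    have "k < b" using b(1,3) 3(2) by (metis le_neq_implies_less)
    have flat: "reduced i = \<theta>" if "a < i" "i \<le> b" for i
    proof (rule reduced_eq_level)
      show "\<theta> \<le> f i"
      proof (cases "i \<le> k")
        case True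
        then have "f (Suc k) \<le> f i" using that \<open>a < i\<close> \<open>k < b\<close> b(2) by (intro f_le) auto
        then show ?thesis using 3 by simp
      next
        case False
        then have "\<not> ?empty_tail (i - 1)" using that by (intro b(4)) auto
        then show ?thesis using False by simp
      qed
      show "f i \<le> \<theta> + l"
      proof (cases "i \<le> k")
        case True
        then show ?thesis using a(3)[OF that(1) True] by simp
      next
        case False
        then have "f i \<le> f k" using that b(2) \<open>a < k\<close> by (intro f_le) auto
        then show ?thesis using 3 by simp
      qed
    qed
    have left: "(\<Sum>i=1..k. reduced i) = (\<Sum>i=1..a. reduced i) + (real k - real a) * \<theta>"
      using sum_atLeastAtMost_split[OF a(1), of reduced] flat \<open>k < b\<close> \<open>a < k\<close>
      by (simp add: of_nat_diff)
    have right: "(\<Sum>i=1..b. reduced i) = (\<Sum>i=1..k. reduced i) + (real b - real k) * \<theta>"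
      using sum_atLeastAtMost_split[OF b(1), of reduced] flat \<open>a < k\<close> \<open>k < b\<close>
      by (simp add: of_nat_diff)
    have "(\<Sum>i=1..a. reduced i) \<le> l * real a * (real m - real a)"
      using reduced_prefix_saturated a(1,2) assms by simp
    moreover have "(\<Sum>i=1..b. reduced i) \<le> l * real b * (real m - real b)"
      using reduced_prefix_empty_tail b(2,3) by simp
    ultimately show ?thesis
      using \<open>a < k\<close> \<open>k < b\<close> by (intro chord_below_parabola[OF _ _ l_nonneg left right]) simp_all
  qed
qed

lemma reduced_admissible: "prefix_admissible l m reduced"
  unfolding prefix_admissible_def using reduced_prefix reduced_sum by auto

end

lemma balancing_extend:
  assumes "balancing l m g \<tau>"
    and "\<And>i. 0 \<le> c i \<and> c i \<le> l"
    and "f (Suc m) + (\<Sum>i=1..m. c i) = 0"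
    and "\<And>i. i \<in> {1..m} \<Longrightarrow> f i = g i + c i"
  shows "\<exists>\<tau>'. balancing l (Suc m) f \<tau>'"
proof -
  define \<tau>' where "\<tau>' i j =
      (if j = Suc m \<and> i \<noteq> Suc m then - c i
       else if i = Suc m \<and> j \<noteq> Suc m then c j else \<tau> i j)" for i j
  have old_entry: "\<bar>\<tau> i j\<bar> \<le> l \<and> \<tau> i j = - \<tau> j i"
    if "i \<in> {1..m}" "j \<in> {1..m}" "i \<noteq> j" for i j
    using assms(1) that unfolding balancing_def by blast
  have old_row: "g i + (\<Sum>j\<in>{1..m} - {i}. \<tau> i j) = 0" if "i \<in> {1..m}" for i
    using assms(1) that unfolding balancing_def by blast
  have "\<bar>\<tau>' i j\<bar> \<le> l \<and> \<tau>' i j = - \<tau>' j i"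
    if "i \<in> {1..Suc m}" "j \<in> {1..Suc m}" "i \<noteq> j" for i j
  proof (cases "i = Suc m \<or> j = Suc m")
    case True
    then show ?thesis using assms(2)[of i] assms(2)[of j] that(3) unfolding \<tau>'_def by auto
  next
    case False
    then have "i \<in> {1..m}" "j \<in> {1..m}" using that(1,2) by auto
    then have "\<bar>\<tau> i j\<bar> \<le> l \<and> \<tau> i j = - \<tau> j i" using old_entry that(3) by blast
    then show ?thesis using False unfolding \<tau>'_def by auto
  qed
  moreover have "f i + (\<Sum>j\<in>{1..Suc m} - {i}. \<tau>' i j) = 0" if "i \<in> {1..Suc m}" for i
  proof (cases "i = Suc m")
    case True
    then have "{1..Suc m} - {i} = {1..m}" by auto
    then show ?thesis using True assms(3) by (simp add: \<tau>'_def)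
  next
    case False
    then have i: "i \<in> {1..m}" using that by auto
    then have "{1..Suc m} - {i} = insert (Suc m) ({1..m} - {i})" by auto
    then have "(\<Sum>j\<in>{1..Suc m} - {i}. \<tau>' i j) = - c i + (\<Sum>j\<in>{1..m} - {i}. \<tau> i j)"
      using False by (simp add: \<tau>'_def)
    then show ?thesis
      using assms(4)[OF i] old_row[OF i] by simp
  qed
  ultimately show ?thesis
    unfolding balancing_def by blast
qed

lemma prefix_admissible_imp_balancing:
  assumes "0 \<le> l" "antimono_on {1..m} f" "prefix_admissible l m f"
  shows "\<exists>\<tau>. balancing l m f \<tau>"
  using assms(2,3)
proof (induction m arbitrary: f)
  case 0
  then show ?case by (simp add: balancing_def)
next
  case (Suc m)
  have f_last_le: "f (Suc m) \<le> f i" if "i \<in> {1..Suc m}" for i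
    using Suc.prems(1) that by (auto intro: monotone_onD)
  have total: "(\<Sum>i=1..m. f i) + f (Suc m) = 0"
    using Suc.prems(2) by (simp add: prefix_admissible_def)
  have "real (Suc m) * f (Suc m) \<le> 0"
    using sum_mono[of "{1..Suc m}" "\<lambda>_. f (Suc m)" f] f_last_le total by simp
  then have "0 \<le> - f (Suc m)"
    by (simp add: mult_le_0_iff)
  moreover have "(\<Sum>i=1..m. f i) \<le> l * real m * (real (Suc m) - real m)"
  proof (cases "m = 0")
    case False
    then have "m \<in> {1..Suc m - 1}" by simp
    then show ?thesis using Suc.prems(2) unfolding prefix_admissible_def by blast
  qed simp
  then have "- f (Suc m) \<le> l * real m"
    using total by simp
  ultimately obtain \<theta> where level: "(\<Sum>i=1..m. clamp l (f i - \<theta>)) = - f (Suc m)"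
    using clamp_sum_attains[of "{1..m}" l "- f (Suc m)" f] assms(1) by auto
  interpret water_filling l \<theta> m f
    using assms(1) Suc.prems level by unfold_locales
  obtain \<tau> where "balancing l m reduced \<tau>"
    using Suc.IH reduced_antimono reduced_admissible by blast
  then show ?case
    using clamp_bounds[OF assms(1)] level
    by (intro balancing_extend[where c = "\<lambda>i. clamp l (f i - \<theta>)"]) (auto simp: reduced_def)
qed

lemma balancing_iff_prefix_admissible:
  assumes "0 \<le> l" "antimono_on {1..m} f"
  shows "(\<exists>\<tau>. balancing l m f \<tau>) \<longleftrightarrow> prefix_admissible l m f"
  using assms balancing_imp_prefix_admissible prefix_admissible_imp_balancing by blast

theorem corollary1:
  fixes m :: nat and lambda2 :: real and f :: "nat \<Rightarrow> real"
  assumes "m \<ge> 1"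
    and "lambda2 \<ge> 0"
    and "\<And>i j. 1 \<le> i \<Longrightarrow> i \<le> j \<Longrightarrow> j \<le> m \<Longrightarrow> f i \<ge> f j"
  shows "(\<exists>\<tau> :: nat \<Rightarrow> nat \<Rightarrow> real.
            (\<forall>i\<in>{1..m}. \<forall>j\<in>{1..m}. i \<noteq> j \<longrightarrow>
                 \<bar>\<tau> i j\<bar> \<le> lambda2 \<and> \<tau> i j = - \<tau> j i)
          \<and> (\<forall>i\<in>{1..m}. f i + (\<Sum>j\<in>{1..m} - {i}. \<tau> i j) = 0))
       \<longleftrightarrow>
         ((\<forall>k\<in>{1..m-1}. (\<Sum>j=1..k. f j) \<le> lambda2 * real k * (real m - real k))
          \<and> (\<Sum>j=1..m. f j) = 0)"
proof -
  have "antimono_on {1..m} f"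
    using assms(3) by (intro monotone_onI) auto
  then show ?thesis
    using balancing_iff_prefix_admissible[OF assms(2)]
    unfolding balancing_def prefix_admissible_def by blast
qed

end
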